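(* Let $n\ge d\ge 1$ and let $(A,C)$ be a strict nondegenerate HOON pair, with $A$ real $n\times n$ and $C$ real $d\times n$. If $(\tilde A,\tilde C)$ is a strict HOON pair that is equivalent to $(A,C)$, then $\tilde A=A$ and $\tilde C=C$.
   Context: $(A,C)$ is a HOON pair if $A$ is upper Hessenberg ($A_{i,j}=0$ for $i>j+1$), $C_{1,j}=0$ for $j>1$, and $A^{*}A=\mathbb{I}_n-C^{*}C$ (${}^*$ = transpose). It is nondegenerate if $|C_{1,1}|<1$, unreduced if $A_{i+1,i}\neq 0$ for $1\le i<n$ and $C_{1,1}\ne 0$, standard if $A_{i+1,i}\ge 0$ for $1\le i<n$ and $0\le C_{1,1}<1$, and strict if it is unreduced and standard. Two pairs are equivalent if $\tilde A=T^{-1}AT$ and $\tilde C=CT$ for some invertible real matrix $T$. *)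

theory Defs
  imports "Jordan_Normal_Form.Matrix"
begin

(* Matrices are Jordan_Normal_Form matrices over the reals; indices are 0-based,
   so the paper's entry (i,j) is  M $$ (i-1, j-1). *)

definition hoon_pair :: "nat \<Rightarrow> nat \<Rightarrow> real mat \<Rightarrow> real mat \<Rightarrow> bool" where
  "hoon_pair n d A C \<longleftrightarrow>
     A \<in> carrier_mat n n \<and> C \<in> carrier_mat d n \<and>
     (\<forall>i<n. \<forall>j<n. i > j + 1 \<longrightarrow> A $$ (i, j) = 0) \<and>
     (\<forall>j<n. j > 0 \<longrightarrow> C $$ (0, j) = 0) \<and>
     transpose_mat A * A = 1\<^sub>m n - transpose_mat C * C"

definition hoon_nondegenerate :: "real mat \<Rightarrow> real mat \<Rightarrow> bool" where
  "hoon_nondegenerate A C \<longleftrightarrow> \<bar>C $$ (0, 0)\<bar> < 1"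

definition hoon_unreduced :: "nat \<Rightarrow> real mat \<Rightarrow> real mat \<Rightarrow> bool" where
  "hoon_unreduced n A C \<longleftrightarrow> (\<forall>i. i + 1 < n \<longrightarrow> A $$ (i + 1, i) \<noteq> 0) \<and> C $$ (0, 0) \<noteq> 0"

definition hoon_standard :: "nat \<Rightarrow> real mat \<Rightarrow> real mat \<Rightarrow> bool" where
  "hoon_standard n A C \<longleftrightarrow> (\<forall>i. i + 1 < n \<longrightarrow> A $$ (i + 1, i) \<ge> 0) \<and>
                               0 \<le> C $$ (0, 0) \<and> C $$ (0, 0) < 1"

definition hoon_strict :: "nat \<Rightarrow> real mat \<Rightarrow> real mat \<Rightarrow> bool" where
  "hoon_strict n A C \<longleftrightarrow> hoon_unreduced n A C \<and> hoon_standard n A C"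

definition hoon_equivalent :: "nat \<Rightarrow> real mat \<Rightarrow> real mat \<Rightarrow> real mat \<Rightarrow> real mat \<Rightarrow> bool" where
  "hoon_equivalent n A C A' C' \<longleftrightarrow>
     (\<exists>T Ti. T \<in> carrier_mat n n \<and> Ti \<in> carrier_mat n n \<and>
            T * Ti = 1\<^sub>m n \<and> Ti * T = 1\<^sub>m n \<and>
            A' = Ti * A * T \<and> C' = C * T)"

end

theory Submission
  imports Defs "Jordan_Normal_Form.Determinant" "HOL-Analysis.Convex"
begin

text \<open>For a strict pair \<open>A\<^sup>T A = 1 - C\<^sup>T C\<close> says that \<open>A\<close> lowers the squared norm by exactly
  \<open>\<parallel>C v\<parallel>\<^sup>2\<close>, and the unreduced Hessenberg shape makes the outputs \<open>C A\<^sup>k v\<close>, \<open>k < n\<close>, determine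
  \<open>v\<close>; hence \<open>A\<^sup>n\<close> is a strict contraction. If \<open>T\<close> realises the equivalence, then
  \<open>\<parallel>T x\<parallel>\<^sup>2 - \<parallel>x\<parallel>\<^sup>2\<close> is invariant under \<open>A'\<close>, since both pairs lose the same output
  \<open>C T x = C' x\<close>; iterating the contraction \<open>A'\<^sup>n\<close> shows that it vanishes, so \<open>T\<close> is orthogonal.
  An orthogonal \<open>T\<close> with \<open>T A' = A T\<close> between Hessenberg matrices with positive subdiagonals,
  whose corner entry is fixed by the outputs, is the identity, column by column.\<close>

(* HOL-Analysis is imported for Cauchy_Schwarz_ineq_sum only; its inner-product notation would clash
   with the scalar product of vectors. *)
unbundle no inner_syntax

definition sq_norm :: "real vec \<Rightarrow> real" where
  "sq_norm v = v \<bullet> v"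

lemma sq_norm_sum: "v \<in> carrier_vec n \<Longrightarrow> sq_norm v = (\<Sum>i<n. (v $ i)\<^sup>2)"
  by (auto simp: sq_norm_def scalar_prod_def power2_eq_square lessThan_atLeast0)

lemma sq_norm_nonneg: "0 \<le> sq_norm v"
  unfolding sq_norm_def scalar_prod_def by (intro sum_nonneg) auto

lemma sq_norm_eq_0_imp_zero:
  assumes v: "v \<in> carrier_vec n" and zero: "sq_norm v = 0"
  shows "v = 0\<^sub>v n"
proof (rule eq_vecI)
  have "(\<Sum>i<n. (v $ i)\<^sup>2) = 0"
    using zero sq_norm_sum[OF v] by simp
  then have "\<forall>i<n. (v $ i)\<^sup>2 = 0"
    by (subst (asm) sum_nonneg_eq_0_iff) auto
  then show "v $ i = 0\<^sub>v n $ i" if "i < dim_vec (0\<^sub>v n)" for i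
    using that by auto
qed (use v in auto)

lemma sq_norm_smult_minus:
  assumes a: "a \<in> carrier_vec n" and b: "b \<in> carrier_vec n"
  shows "sq_norm (s \<cdot>\<^sub>v a - b) = s\<^sup>2 * sq_norm a - 2 * s * (a \<bullet> b) + sq_norm b"
proof -
  have "sq_norm (s \<cdot>\<^sub>v a - b) = (\<Sum>i<n. (s * a $ i - b $ i)\<^sup>2)"
    using a b by (subst sq_norm_sum[of _ n]) auto
  also have "\<dots> = (\<Sum>i<n. s\<^sup>2 * (a $ i)\<^sup>2 - 2 * s * (a $ i * b $ i) + (b $ i)\<^sup>2)"
    by (intro sum.cong) (auto simp: power2_eq_square algebra_simps)
  also have "\<dots> = s\<^sup>2 * sq_norm a - 2 * s * (a \<bullet> b) + sq_norm b"
    using a b by (simp add: sum.distrib sum_subtractf sum_distrib_left sq_norm_sum[of _ n]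
        scalar_prod_def lessThan_atLeast0)
  finally show ?thesis .
qed

lemma sq_norm_unit_vec: "j < n \<Longrightarrow> sq_norm (unit_vec n j) = 1"
  unfolding sq_norm_def by simp

lemma sum_lessThan_single:
  fixes f :: "nat \<Rightarrow> 'a :: comm_monoid_add"
  assumes m: "m < n" and others: "\<And>k. k < n \<Longrightarrow> k \<noteq> m \<Longrightarrow> f k = 0"
  shows "(\<Sum>k<n. f k) = f m"
  using sum.mono_neutral_right[of "{..<n}" "{m}" f] m others by auto

definition frobenius_sq :: "real mat \<Rightarrow> real" where
  "frobenius_sq L = (\<Sum>i<dim_row L. \<Sum>j<dim_col L. (L $$ (i, j))\<^sup>2)"

lemma frobenius_sq_nonneg: "0 \<le> frobenius_sq L"
  unfolding frobenius_sq_def by (intro sum_nonneg) auto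

lemma sq_norm_mult_vec_le:
  assumes L: "L \<in> carrier_mat m k" and v: "v \<in> carrier_vec k"
  shows "sq_norm (L *\<^sub>v v) \<le> frobenius_sq L * sq_norm v"
proof -
  have "sq_norm (L *\<^sub>v v) = (\<Sum>i<m. (\<Sum>j<k. L $$ (i, j) * v $ j)\<^sup>2)"
    using L v by (subst sq_norm_sum[of _ m])
      (auto intro!: sum.cong simp: scalar_prod_def lessThan_atLeast0)
  also have "\<dots> \<le> (\<Sum>i<m. (\<Sum>j<k. (L $$ (i, j))\<^sup>2) * (\<Sum>j<k. (v $ j)\<^sup>2))"
    by (intro sum_mono Cauchy_Schwarz_ineq_sum)
  also have "\<dots> = frobenius_sq L * sq_norm v"
    using L unfolding frobenius_sq_def sq_norm_sum[OF v] by (simp add: sum_distrib_right)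
  finally show ?thesis .
qed

lemma mult_mat_vec_zero [simp]:
  "A \<in> carrier_mat m k \<Longrightarrow> A *\<^sub>v 0\<^sub>v k = (0\<^sub>v m :: 'a :: semiring_0 vec)"
  by (intro eq_vecI) auto

lemma transpose_mult_mult_vec_gram:
  fixes B D :: "real mat"
  assumes B: "B \<in> carrier_mat n n" and D: "D \<in> carrier_mat d n"
    and gram: "transpose_mat B * B = 1\<^sub>m n - transpose_mat D * D"
    and v: "v \<in> carrier_vec n"
  shows "transpose_mat B *\<^sub>v (B *\<^sub>v v) = v - transpose_mat D *\<^sub>v (D *\<^sub>v v)"
proof -
  have "transpose_mat B *\<^sub>v (B *\<^sub>v v) = (1\<^sub>m n - transpose_mat D * D) *\<^sub>v v"
    using B v by (simp flip: gram)
  also have "\<dots> = 1\<^sub>m n *\<^sub>v v - (transpose_mat D * D) *\<^sub>v v"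
    by (rule minus_mult_distrib_mat_vec) (use D v in auto)
  finally show ?thesis
    using D v by auto
qed

lemma sq_norm_mult_vec_gram:
  fixes B D :: "real mat"
  assumes B: "B \<in> carrier_mat n n" and D: "D \<in> carrier_mat d n"
    and gram: "transpose_mat B * B = 1\<^sub>m n - transpose_mat D * D"
    and v: "v \<in> carrier_vec n"
  shows "sq_norm (B *\<^sub>v v) = sq_norm v - sq_norm (D *\<^sub>v v)"
proof -
  have "sq_norm (B *\<^sub>v v) = (transpose_mat B *\<^sub>v (B *\<^sub>v v)) \<bullet> v"
    unfolding sq_norm_def using transpose_vec_mult_scalar[OF B v, of "B *\<^sub>v v"] B v by simp
  also have "\<dots> = v \<bullet> v - (transpose_mat D *\<^sub>v (D *\<^sub>v v)) \<bullet> v"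
    unfolding transpose_mult_mult_vec_gram[OF assms] using D v by (simp add: minus_scalar_prod_distrib)
  also have "(transpose_mat D *\<^sub>v (D *\<^sub>v v)) \<bullet> v = sq_norm (D *\<^sub>v v)"
    unfolding sq_norm_def using transpose_vec_mult_scalar[OF D v, of "D *\<^sub>v v"] D v by simp
  finally show ?thesis
    unfolding sq_norm_def .
qed

lemma pow_mat_Suc_mult_vec:
  fixes A :: "'a :: semiring_1 mat"
  assumes A: "A \<in> carrier_mat n n" and v: "v \<in> carrier_vec n"
  shows "(A ^\<^sub>m Suc k) *\<^sub>v v = A *\<^sub>v ((A ^\<^sub>m k) *\<^sub>v v)"
proof -
  have "A ^\<^sub>m Suc k = A * A ^\<^sub>m k"
    using A by (induct k) (auto simp: assoc_mult_mat[of _ n n _ n _ n])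
  then show ?thesis
    by (metis A v assoc_mult_mat_vec pow_carrier_mat)
qed

lemma scalar_prod_gram_defect:
  fixes R :: "real mat"
  assumes R: "R \<in> carrier_mat n n" and x: "x \<in> carrier_vec n" and y: "y \<in> carrier_vec n"
  shows "x \<bullet> ((1\<^sub>m n - transpose_mat R * R) *\<^sub>v y) = x \<bullet> y - (R *\<^sub>v x) \<bullet> (R *\<^sub>v y)"
proof -
  have "(1\<^sub>m n - transpose_mat R * R) *\<^sub>v y = 1\<^sub>m n *\<^sub>v y - (transpose_mat R * R) *\<^sub>v y"
    by (rule minus_mult_distrib_mat_vec) (use R y in auto)
  also have "\<dots> = y - transpose_mat R *\<^sub>v (R *\<^sub>v y)"
    using R y by auto
  finally have "x \<bullet> ((1\<^sub>m n - transpose_mat R * R) *\<^sub>v y) = x \<bullet> y - x \<bullet> (transpose_mat R *\<^sub>v (R *\<^sub>v y))"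
    using R x y by (simp add: scalar_prod_minus_distrib[of x n])
  also have "x \<bullet> (transpose_mat R *\<^sub>v (R *\<^sub>v y)) = (R *\<^sub>v x) \<bullet> (R *\<^sub>v y)"
    using transpose_vec_mult_scalar[OF R x, of "R *\<^sub>v y"] R x y
    by (simp add: comm_scalar_prod[of x n] comm_scalar_prod[of "R *\<^sub>v y" n])
  finally show ?thesis .
qed

lemma left_inverse_if_injective:
  fixes M :: "'a :: field mat"
  assumes M: "M \<in> carrier_mat n n"
    and inj: "\<And>v. v \<in> carrier_vec n \<Longrightarrow> M *\<^sub>v v = 0\<^sub>v n \<Longrightarrow> v = 0\<^sub>v n"
  shows "\<exists>N. N \<in> carrier_mat n n \<and> N * M = 1\<^sub>m n"
proof -
  have "det M \<noteq> 0"
    using det_0_iff_vec_prod_zero_field[OF M] inj by auto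
  from det_non_zero_imp_unit[OF M this, of "()"] show ?thesis
    unfolding Units_def ring_mat_def by auto
qed

lemma sq_norm_defect_smult_minus:
  fixes R :: "real mat"
  assumes R: "R \<in> carrier_mat n n" and u: "u \<in> carrier_vec n" and v: "v \<in> carrier_vec n"
  shows "sq_norm (s \<cdot>\<^sub>v u - v) - sq_norm (R *\<^sub>v (s \<cdot>\<^sub>v u - v)) =
    s\<^sup>2 * (sq_norm u - sq_norm (R *\<^sub>v u)) - 2 * s * (u \<bullet> v - (R *\<^sub>v u) \<bullet> (R *\<^sub>v v))
      + (sq_norm v - sq_norm (R *\<^sub>v v))"
proof -
  have Rw: "R *\<^sub>v (s \<cdot>\<^sub>v u - v) = s \<cdot>\<^sub>v (R *\<^sub>v u) - R *\<^sub>v v"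
    using R u v by (simp add: mult_minus_distrib_mat_vec mult_mat_vec)
  show ?thesis
    unfolding Rw sq_norm_smult_minus[OF u v]
      sq_norm_smult_minus[OF mult_mat_vec_carrier[OF R u] mult_mat_vec_carrier[OF R v]]
    by (simp add: algebra_simps)
qed

text \<open>\<open>M = 1 - R\<^sup>T R\<close> is the Gram matrix of the nonnegative form \<open>\<parallel>v\<parallel>\<^sup>2 - \<parallel>R v\<parallel>\<^sup>2\<close>;
  testing the form at \<open>s u - v\<close> with \<open>u = N\<^sup>T v\<close>, \<open>N M = 1\<close>, yields a uniform gap.\<close>

lemma sq_norm_mult_vec_gap:
  fixes R N :: "real mat"
  assumes R: "R \<in> carrier_mat n n" and N: "N \<in> carrier_mat n n"
    and nonexpansive: "\<And>v. v \<in> carrier_vec n \<Longrightarrow> sq_norm (R *\<^sub>v v) \<le> sq_norm v"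
    and left_inverse: "N * (1\<^sub>m n - transpose_mat R * R) = 1\<^sub>m n"
    and v: "v \<in> carrier_vec n"
  shows "sq_norm (R *\<^sub>v v) \<le> (1 - 1 / (frobenius_sq (transpose_mat N) + 1)) * sq_norm v"
proof -
  define M where "M = 1\<^sub>m n - transpose_mat R * R"
  define K where "K = frobenius_sq (transpose_mat N)"
  define s where "s = 1 / (K + 1)"
  define u where "u = transpose_mat N *\<^sub>v v"
  have M: "M \<in> carrier_mat n n"
    unfolding M_def using R by auto
  have u: "u \<in> carrier_vec n"
    unfolding u_def using N v by auto
  have "0 < K + 1"
    using frobenius_sq_nonneg[of "transpose_mat N"] unfolding K_def by linarith
  then have "s * K = 1 - s"
    unfolding s_def by (simp add: field_simps)
  then have sK: "s\<^sup>2 * K = s - s\<^sup>2"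
    by (metis mult.assoc power2_eq_square right_diff_distrib mult_1_right)
  have u_le: "sq_norm u \<le> K * sq_norm v"
    unfolding u_def K_def by (rule sq_norm_mult_vec_le) (use N v in auto)
  have "N *\<^sub>v (M *\<^sub>v v) = v"
    using N M v left_inverse unfolding M_def[symmetric] by (metis assoc_mult_mat_vec one_mult_mat_vec)
  then have "sq_norm v = v \<bullet> (N *\<^sub>v (M *\<^sub>v v))"
    by (simp add: sq_norm_def)
  also have "\<dots> = u \<bullet> (M *\<^sub>v v)"
    using transpose_vec_mult_scalar[OF N, of "M *\<^sub>v v" v] M v unfolding u_def by simp
  also have "\<dots> = u \<bullet> v - (R *\<^sub>v u) \<bullet> (R *\<^sub>v v)"
    unfolding M_def by (rule scalar_prod_gram_defect[OF R u v])
  finally have uv: "sq_norm v = u \<bullet> v - (R *\<^sub>v u) \<bullet> (R *\<^sub>v v)" .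
  have "0 \<le> sq_norm (s \<cdot>\<^sub>v u - v) - sq_norm (R *\<^sub>v (s \<cdot>\<^sub>v u - v))"
    using nonexpansive[of "s \<cdot>\<^sub>v u - v"] u v by simp
  also have "\<dots> = s\<^sup>2 * (sq_norm u - sq_norm (R *\<^sub>v u)) - 2 * s * (u \<bullet> v - (R *\<^sub>v u) \<bullet> (R *\<^sub>v v))
      + (sq_norm v - sq_norm (R *\<^sub>v v))"
    by (rule sq_norm_defect_smult_minus[OF R u v])
  also have "\<dots> = s\<^sup>2 * (sq_norm u - sq_norm (R *\<^sub>v u)) - 2 * s * sq_norm v
      + (sq_norm v - sq_norm (R *\<^sub>v v))"
    unfolding uv[symmetric] ..
  also have "\<dots> \<le> s\<^sup>2 * (K * sq_norm v) - 2 * s * sq_norm v + (sq_norm v - sq_norm (R *\<^sub>v v))"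
  proof -
    have "s\<^sup>2 * (sq_norm u - sq_norm (R *\<^sub>v u)) \<le> s\<^sup>2 * (K * sq_norm v)"
      using u_le sq_norm_nonneg[of "R *\<^sub>v u"] by (intro mult_left_mono) auto
    then show ?thesis
      by linarith
  qed
  also have "\<dots> = (s - s\<^sup>2) * sq_norm v - 2 * s * sq_norm v + (sq_norm v - sq_norm (R *\<^sub>v v))"
    by (metis mult.assoc sK)
  also have "\<dots> = (1 - s) * sq_norm v - s\<^sup>2 * sq_norm v - sq_norm (R *\<^sub>v v)"
    by (simp add: algebra_simps)
  finally have "0 \<le> (1 - s) * sq_norm v - s\<^sup>2 * sq_norm v - sq_norm (R *\<^sub>v v)" .
  moreover have "0 \<le> s\<^sup>2 * sq_norm v"
    using sq_norm_nonneg[of v] by simp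
  ultimately show ?thesis
    unfolding s_def K_def by linarith
qed

lemma uniform_contraction_if_rigid:
  fixes R :: "real mat"
  assumes R: "R \<in> carrier_mat n n"
    and nonexpansive: "\<And>v. v \<in> carrier_vec n \<Longrightarrow> sq_norm (R *\<^sub>v v) \<le> sq_norm v"
    and rigid: "\<And>v. v \<in> carrier_vec n \<Longrightarrow> sq_norm (R *\<^sub>v v) = sq_norm v \<Longrightarrow> v = 0\<^sub>v n"
  shows "\<exists>q. 0 \<le> q \<and> q < 1 \<and> (\<forall>v \<in> carrier_vec n. sq_norm (R *\<^sub>v v) \<le> q * sq_norm v)"
proof -
  let ?M = "1\<^sub>m n - transpose_mat R * R"
  have M: "?M \<in> carrier_mat n n"
    using R by auto
  have "v = 0\<^sub>v n" if v: "v \<in> carrier_vec n" and "?M *\<^sub>v v = 0\<^sub>v n" for v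
    using rigid[OF v] scalar_prod_gram_defect[OF R v v] that unfolding sq_norm_def by simp
  then obtain N where N: "N \<in> carrier_mat n n" and NM: "N * ?M = 1\<^sub>m n"
    using left_inverse_if_injective[OF M] by blast
  show ?thesis
    using sq_norm_mult_vec_gap[OF R N nonexpansive NM] frobenius_sq_nonneg[of "transpose_mat N"]
    by (intro exI[of _ "1 - 1 / (frobenius_sq (transpose_mat N) + 1)"]) auto
qed

locale unreduced_hoon_pair =
  fixes n d :: nat and B D :: "real mat"
  assumes pair: "hoon_pair n d B D" and unreduced: "hoon_unreduced n B D"
    and d_pos: "0 < d" and n_pos: "0 < n"
begin

lemma B_carrier: "B \<in> carrier_mat n n"
  and D_carrier: "D \<in> carrier_mat d n"
  and hessenberg: "\<And>i j. i < n \<Longrightarrow> j < n \<Longrightarrow> j + 1 < i \<Longrightarrow> B $$ (i, j) = 0"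
  and D_row_0: "\<And>j. j < n \<Longrightarrow> 0 < j \<Longrightarrow> D $$ (0, j) = 0"
  and gram: "transpose_mat B * B = 1\<^sub>m n - transpose_mat D * D"
  using pair unfolding hoon_pair_def by auto

lemma subdiagonal_nonzero: "i + 1 < n \<Longrightarrow> B $$ (i + 1, i) \<noteq> 0"
  and D_00_nonzero: "D $$ (0, 0) \<noteq> 0"
  using unreduced unfolding hoon_unreduced_def by auto

lemma pow_mult_vec_carrier [simp]: "v \<in> carrier_vec n \<Longrightarrow> (B ^\<^sub>m k) *\<^sub>v v \<in> carrier_vec n"
  using B_carrier by (metis mult_mat_vec_carrier pow_carrier_mat)

lemma mult_vec_index_0:
  assumes w: "w \<in> carrier_vec n"
  shows "(D *\<^sub>v w) $ 0 = D $$ (0, 0) * w $ 0"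
proof -
  have "(D *\<^sub>v w) $ 0 = (\<Sum>j<n. D $$ (0, j) * w $ j)"
    using D_carrier w d_pos by (auto simp: scalar_prod_def lessThan_atLeast0)
  also have "\<dots> = D $$ (0, 0) * w $ 0"
    by (rule sum_lessThan_single) (use n_pos D_row_0 in auto)
  finally show ?thesis .
qed

lemma mult_index_0_0:
  assumes Y: "Y \<in> carrier_mat n k" and k: "0 < k"
  shows "(D * Y) $$ (0, 0) = D $$ (0, 0) * Y $$ (0, 0)"
  using mult_vec_index_0[of "col Y 0"] D_carrier Y k d_pos n_pos by simp

lemma transpose_mult_vec_index:
  assumes u: "u \<in> carrier_vec n" and i: "i + 1 < n" and zero: "\<And>j. j \<le> i \<Longrightarrow> u $ j = 0"
  shows "(transpose_mat B *\<^sub>v u) $ i = B $$ (i + 1, i) * u $ (i + 1)"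
proof -
  have "(transpose_mat B *\<^sub>v u) $ i = (\<Sum>l<n. B $$ (l, i) * u $ l)"
    using B_carrier u i by (auto simp: scalar_prod_def lessThan_atLeast0)
  also have "\<dots> = B $$ (i + 1, i) * u $ (i + 1)"
  proof (rule sum_lessThan_single)
    fix l assume l: "l < n" "l \<noteq> i + 1"
    show "B $$ (l, i) * u $ l = 0"
      by (cases "l \<le> i") (use zero hessenberg l i in auto)
  qed (use i in simp)
  finally show ?thesis .
qed

lemma transpose_mult_mult_vec:
  "v \<in> carrier_vec n \<Longrightarrow> transpose_mat B *\<^sub>v (B *\<^sub>v v) = v - transpose_mat D *\<^sub>v (D *\<^sub>v v)"
  by (rule transpose_mult_mult_vec_gram[OF B_carrier D_carrier gram])

lemma sq_norm_mult_vec: "v \<in> carrier_vec n \<Longrightarrow> sq_norm (B *\<^sub>v v) = sq_norm v - sq_norm (D *\<^sub>v v)"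
  by (rule sq_norm_mult_vec_gram[OF B_carrier D_carrier gram])

lemma sq_norm_pow_mult_vec:
  assumes v: "v \<in> carrier_vec n"
  shows "sq_norm ((B ^\<^sub>m k) *\<^sub>v v) + (\<Sum>j<k. sq_norm (D *\<^sub>v ((B ^\<^sub>m j) *\<^sub>v v))) = sq_norm v"
proof (induction k)
  case (Suc k)
  have "sq_norm ((B ^\<^sub>m Suc k) *\<^sub>v v) = sq_norm ((B ^\<^sub>m k) *\<^sub>v v) - sq_norm (D *\<^sub>v ((B ^\<^sub>m k) *\<^sub>v v))"
    using pow_mat_Suc_mult_vec[OF B_carrier v] sq_norm_mult_vec B_carrier v by simp
  then show ?case
    using Suc by simp
qed (use B_carrier v in simp)

lemma sq_norm_pow_mult_vec_le: "v \<in> carrier_vec n \<Longrightarrow> sq_norm ((B ^\<^sub>m k) *\<^sub>v v) \<le> sq_norm v"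
  using sq_norm_pow_mult_vec[of v k] sum_nonneg[of "{..<k}"] sq_norm_nonneg
  by (metis le_add_same_cancel1)

text \<open>Along an orbit with \<open>D B\<^sup>k v = 0\<close> we have \<open>B\<^sup>k v = B\<^sup>T B\<^sup>k\<^sup>+\<^sup>1 v\<close>; reading this off at the
  subdiagonal shows inductively that \<open>B\<^sup>k v\<close> has \<open>k + 1\<close> leading zeros.\<close>

lemma unobservable_leading_zeros:
  assumes v: "v \<in> carrier_vec n"
    and silent: "\<And>k. k < n \<Longrightarrow> D *\<^sub>v ((B ^\<^sub>m k) *\<^sub>v v) = 0\<^sub>v d"
    and "i \<le> k" and "k < n" and "j \<le> i"
  shows "((B ^\<^sub>m k) *\<^sub>v v) $ j = 0"
  using assms(3-5)
proof (induction i arbitrary: k j)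
  case 0
  have "(D *\<^sub>v ((B ^\<^sub>m k) *\<^sub>v v)) $ 0 = 0"
    using silent[OF \<open>k < n\<close>] d_pos by simp
  then have "D $$ (0, 0) * ((B ^\<^sub>m k) *\<^sub>v v) $ 0 = 0"
    using mult_vec_index_0[of "(B ^\<^sub>m k) *\<^sub>v v"] B_carrier v by simp
  then show ?case
    using 0 D_00_nonzero by simp
next
  case (Suc i)
  show ?case
  proof (cases "j \<le> i")
    case True
    then show ?thesis
      using Suc by simp
  next
    case False
    then have j: "j = i + 1"
      using Suc.prems by simp
    obtain k' where k': "k = Suc k'"
      using Suc.prems by (cases k) auto
    let ?x = "(B ^\<^sub>m k') *\<^sub>v v" and ?y = "(B ^\<^sub>m k) *\<^sub>v v"
    have "transpose_mat B *\<^sub>v ?y = ?x"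
      using transpose_mult_mult_vec[of ?x] silent[of k'] Suc.prems B_carrier D_carrier v
      by (simp add: k' pow_mat_Suc_mult_vec del: pow_mat.simps(2))
    then have "?x $ i = B $$ (i + 1, i) * ?y $ (i + 1)"
      using transpose_mult_vec_index[of ?y i] Suc B_carrier v by simp
    moreover have "?x $ i = 0"
      using Suc k' by simp
    ultimately show ?thesis
      using subdiagonal_nonzero[of i] Suc.prems j by simp
  qed
qed

lemma observable:
  assumes v: "v \<in> carrier_vec n"
    and silent: "\<And>k. k < n \<Longrightarrow> D *\<^sub>v ((B ^\<^sub>m k) *\<^sub>v v) = 0\<^sub>v d"
  shows "v = 0\<^sub>v n"
proof -
  have "(B ^\<^sub>m k) *\<^sub>v v = 0\<^sub>v n" if "k \<le> n - 1" for k
    using that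
  proof (induction k rule: inc_induct)
    case base
    show ?case
      using unobservable_leading_zeros[OF v silent, of "n - 1" "n - 1"] B_carrier v n_pos
      by (intro eq_vecI) auto
  next
    case (step k)
    have x: "(B ^\<^sub>m k) *\<^sub>v v \<in> carrier_vec n"
      using B_carrier v by simp
    have "(B ^\<^sub>m k) *\<^sub>v v = transpose_mat B *\<^sub>v (B *\<^sub>v ((B ^\<^sub>m k) *\<^sub>v v))"
      using transpose_mult_mult_vec[OF x] silent[of k] step D_carrier x by simp
    also have "B *\<^sub>v ((B ^\<^sub>m k) *\<^sub>v v) = 0\<^sub>v n"
      using step pow_mat_Suc_mult_vec[OF B_carrier v] by simp
    finally show ?case
      using B_carrier by simp
  qed
  from this[of 0] show ?thesis
    using B_carrier v by simp
qed

lemma pow_mult_vec_rigid: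
  assumes v: "v \<in> carrier_vec n" and eq: "sq_norm ((B ^\<^sub>m n) *\<^sub>v v) = sq_norm v"
  shows "v = 0\<^sub>v n"
proof (rule observable[OF v])
  have "(\<Sum>j<n. sq_norm (D *\<^sub>v ((B ^\<^sub>m j) *\<^sub>v v))) = 0"
    using sq_norm_pow_mult_vec[OF v, of n] eq by simp
  then have "\<forall>j<n. sq_norm (D *\<^sub>v ((B ^\<^sub>m j) *\<^sub>v v)) = 0"
    by (subst (asm) sum_nonneg_eq_0_iff) (auto simp: sq_norm_nonneg)
  then show "D *\<^sub>v ((B ^\<^sub>m k) *\<^sub>v v) = 0\<^sub>v d" if "k < n" for k
    using that sq_norm_eq_0_imp_zero D_carrier B_carrier v by (metis mult_mat_vec_carrier pow_carrier_mat)
qed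

lemma pow_strict_contraction:
  "\<exists>q. 0 \<le> q \<and> q < 1 \<and> (\<forall>v \<in> carrier_vec n. sq_norm ((B ^\<^sub>m n) *\<^sub>v v) \<le> q * sq_norm v)"
  using B_carrier by (intro uniform_contraction_if_rigid sq_norm_pow_mult_vec_le pow_mult_vec_rigid) auto

end

locale strict_hoon_pair = unreduced_hoon_pair +
  assumes standard: "hoon_standard n B D"
begin

lemma subdiagonal_pos: "i + 1 < n \<Longrightarrow> 0 < B $$ (i + 1, i)"
  and D_00_pos: "0 < D $$ (0, 0)"
  using standard subdiagonal_nonzero D_00_nonzero unfolding hoon_standard_def
  by (auto simp: less_le)

end

lemma invariant_under_pow_mat:
  assumes A: "A \<in> carrier_mat n n"
    and invariant: "\<And>x. x \<in> carrier_vec n \<Longrightarrow> f (A *\<^sub>v x) = f x"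
    and x: "x \<in> carrier_vec n"
  shows "f ((A ^\<^sub>m k) *\<^sub>v x) = f x"
proof (induction k)
  case (Suc k)
  have "(A ^\<^sub>m k) *\<^sub>v x \<in> carrier_vec n"
    using A x by (metis mult_mat_vec_carrier pow_carrier_mat)
  then show ?case
    using Suc invariant pow_mat_Suc_mult_vec[OF A x] by simp
qed (use A x in simp)

lemma invariant_form_vanishes:
  fixes f :: "real vec \<Rightarrow> real" and R :: "real mat"
  assumes R: "R \<in> carrier_mat n n" and q: "0 \<le> q" "q < 1"
    and contraction: "\<forall>v \<in> carrier_vec n. sq_norm (R *\<^sub>v v) \<le> q * sq_norm v"
    and K: "0 \<le> K" and bounded: "\<And>v. v \<in> carrier_vec n \<Longrightarrow> \<bar>f v\<bar> \<le> K * sq_norm v"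
    and invariant: "\<And>v. v \<in> carrier_vec n \<Longrightarrow> f (R *\<^sub>v v) = f v"
    and v: "v \<in> carrier_vec n"
  shows "f v = 0"
proof -
  have orbit: "(R ^\<^sub>m k) *\<^sub>v v \<in> carrier_vec n" for k
    using R v by (metis mult_mat_vec_carrier pow_carrier_mat)
  have decay: "sq_norm ((R ^\<^sub>m k) *\<^sub>v v) \<le> q ^ k * sq_norm v" for k
  proof (induction k)
    case (Suc k)
    have "sq_norm (R *\<^sub>v ((R ^\<^sub>m k) *\<^sub>v v)) \<le> q * sq_norm ((R ^\<^sub>m k) *\<^sub>v v)"
      using contraction orbit by blast
    also have "\<dots> \<le> q * (q ^ k * sq_norm v)"
      using Suc q by (intro mult_left_mono) auto
    finally show ?case
      using pow_mat_Suc_mult_vec[OF R v] by simp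
  qed (use R v in simp)
  have "\<bar>f v\<bar> \<le> K * sq_norm v * q ^ k" for k
  proof -
    have "\<bar>f v\<bar> = \<bar>f ((R ^\<^sub>m k) *\<^sub>v v)\<bar>"
      using invariant_under_pow_mat[where f = f, OF R invariant v] by simp
    also have "\<dots> \<le> K * sq_norm ((R ^\<^sub>m k) *\<^sub>v v)"
      by (rule bounded[OF orbit])
    also have "\<dots> \<le> K * (q ^ k * sq_norm v)"
      using decay K by (rule mult_left_mono)
    finally show ?thesis
      by (simp add: ac_simps)
  qed
  moreover have "(\<lambda>k. K * sq_norm v * q ^ k) \<longlonglongrightarrow> 0"
    using tendsto_mult[OF tendsto_const LIMSEQ_realpow_zero[OF q]] by simp
  ultimately have "\<bar>f v\<bar> \<le> 0"
    by (intro LIMSEQ_le_const) auto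
  then show ?thesis
    by simp
qed

lemma intertwiner_preserves_sq_norm:
  fixes A C A' C' T :: "real mat"
  assumes pair: "hoon_pair n d A C" and pair': "unreduced_hoon_pair n d A' C'"
    and T: "T \<in> carrier_mat n n" and intertwine: "T * A' = A * T" and observe: "C * T = C'"
    and v: "v \<in> carrier_vec n"
  shows "sq_norm (T *\<^sub>v v) = sq_norm v"
proof -
  interpret Q: unreduced_hoon_pair n d A' C'
    by (rule pair')
  have A: "A \<in> carrier_mat n n" and C: "C \<in> carrier_mat d n"
    and gram: "transpose_mat A * A = 1\<^sub>m n - transpose_mat C * C"
    using pair unfolding hoon_pair_def by auto
  define f where "f x = sq_norm (T *\<^sub>v x) - sq_norm x" for x
  have invariant: "f (A' *\<^sub>v x) = f x" if x: "x \<in> carrier_vec n" for x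
  proof -
    have "T *\<^sub>v (A' *\<^sub>v x) = A *\<^sub>v (T *\<^sub>v x)"
      using intertwine T A Q.B_carrier x by (metis assoc_mult_mat_vec)
    moreover have "C *\<^sub>v (T *\<^sub>v x) = C' *\<^sub>v x"
      using observe C T x by (metis assoc_mult_mat_vec)
    ultimately show ?thesis
      unfolding f_def using sq_norm_mult_vec_gram[OF A C gram, of "T *\<^sub>v x"]
        Q.sq_norm_mult_vec[OF x] T x by simp
  qed
  obtain q where q: "0 \<le> q" "q < 1"
    and contraction: "\<forall>v \<in> carrier_vec n. sq_norm ((A' ^\<^sub>m n) *\<^sub>v v) \<le> q * sq_norm v"
    using Q.pow_strict_contraction by blast
  have bounded: "\<bar>f x\<bar> \<le> (frobenius_sq T + 1) * sq_norm x" if x: "x \<in> carrier_vec n" for x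
    using sq_norm_mult_vec_le[OF T x] sq_norm_nonneg[of "T *\<^sub>v x"] sq_norm_nonneg[of x]
    unfolding f_def by (auto simp: algebra_simps)
  have "f v = 0"
    using invariant_form_vanishes[OF _ q contraction _ bounded _ v]
      invariant_under_pow_mat[where f = f, OF Q.B_carrier invariant] Q.B_carrier frobenius_sq_nonneg[of T]
    by simp
  then show ?thesis
    unfolding f_def by simp
qed

lemma sq_norm_preserving_scalar_prod:
  fixes T :: "real mat"
  assumes T: "T \<in> carrier_mat n n"
    and isometry: "\<And>v. v \<in> carrier_vec n \<Longrightarrow> sq_norm (T *\<^sub>v v) = sq_norm v"
    and x: "x \<in> carrier_vec n" and y: "y \<in> carrier_vec n"
  shows "(T *\<^sub>v x) \<bullet> (T *\<^sub>v y) = x \<bullet> y"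
proof -
  have "T *\<^sub>v (1 \<cdot>\<^sub>v x - y) = 1 \<cdot>\<^sub>v (T *\<^sub>v x) - T *\<^sub>v y"
    using T x y by (simp add: mult_minus_distrib_mat_vec)
  then show ?thesis
    using isometry[of "1 \<cdot>\<^sub>v x - y"] isometry[OF x] isometry[OF y] T x y
      sq_norm_smult_minus[OF x y, of 1] sq_norm_smult_minus[of "T *\<^sub>v x" n "T *\<^sub>v y" 1]
    by simp
qed

lemma mult_unit_vec_eq_col:
  fixes T :: "'a :: semiring_1 mat"
  shows "T \<in> carrier_mat m n \<Longrightarrow> j < n \<Longrightarrow> T *\<^sub>v unit_vec n j = col T j"
  by (intro eq_vecI) (auto simp: scalar_prod_right_unit)

lemma sq_norm_preserving_col:
  fixes T :: "real mat"
  assumes T: "T \<in> carrier_mat n n"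
    and isometry: "\<And>v. v \<in> carrier_vec n \<Longrightarrow> sq_norm (T *\<^sub>v v) = sq_norm v"
    and j: "j < n"
  shows "sq_norm (col T j) = 1"
  using isometry[of "unit_vec n j"] sq_norm_unit_vec[OF j] mult_unit_vec_eq_col[OF T j] by simp

lemma sq_norm_eq_1_imp_unit_vec:
  assumes v: "v \<in> carrier_vec n" and j: "j < n" and norm: "sq_norm v = 1" and vj: "v $ j = 1"
  shows "v = unit_vec n j"
proof -
  have "(\<Sum>i<n. (v $ i)\<^sup>2) = (v $ j)\<^sup>2 + (\<Sum>i\<in>{..<n} - {j}. (v $ i)\<^sup>2)"
    using j by (subst sum.remove[of _ j]) auto
  then have "(\<Sum>i\<in>{..<n} - {j}. (v $ i)\<^sup>2) = 0"
    using norm vj sq_norm_sum[OF v] by simp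
  then have "v $ i = 0" if "i < n" "i \<noteq> j" for i
    using that by (subst (asm) sum_nonneg_eq_0_iff) auto
  then show ?thesis
    using v vj j by (intro eq_vecI) auto
qed

text \<open>The corner of \<open>T\<close> is pinned down by the outputs: \<open>C' = C T\<close> and \<open>C = C' T\<^sup>-\<^sup>1\<close> give
  \<open>T\<^sub>0\<^sub>0 (T\<^sup>-\<^sup>1)\<^sub>0\<^sub>0 = 1\<close> with both factors positive and, by isometry, at most \<open>1\<close>.\<close>

lemma isometric_intertwiner_corner:
  fixes T Ti :: "real mat"
  assumes P: "strict_hoon_pair n d A C" and Q: "strict_hoon_pair n d A' C'"
    and T: "T \<in> carrier_mat n n" and Ti: "Ti \<in> carrier_mat n n" and inverse: "T * Ti = 1\<^sub>m n"
    and observe: "C * T = C'"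
    and isometry: "\<And>v. v \<in> carrier_vec n \<Longrightarrow> sq_norm (T *\<^sub>v v) = sq_norm v"
  shows "T $$ (0, 0) = 1"
proof -
  interpret P: strict_hoon_pair n d A C by (rule P)
  interpret Q: strict_hoon_pair n d A' C' by (rule Q)
  have Ti_isometry: "sq_norm (Ti *\<^sub>v v) = sq_norm v" if v: "v \<in> carrier_vec n" for v
  proof -
    have "T *\<^sub>v (Ti *\<^sub>v v) = v"
      using T Ti v inverse by (simp flip: assoc_mult_mat_vec)
    then show ?thesis
      using isometry[of "Ti *\<^sub>v v"] Ti v by simp
  qed
  have "C' * Ti = C * (T * Ti)"
    using assoc_mult_mat[OF P.D_carrier T Ti] observe by simp
  then have "C' * Ti = C"
    using P.D_carrier inverse by simp
  then have "C $$ (0, 0) = C' $$ (0, 0) * Ti $$ (0, 0)"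
    using Q.mult_index_0_0[OF Ti] P.n_pos by simp
  moreover have "C' $$ (0, 0) = C $$ (0, 0) * T $$ (0, 0)"
    using P.mult_index_0_0[OF T] P.n_pos observe by simp
  ultimately have product: "T $$ (0, 0) * Ti $$ (0, 0) = 1" and T_pos: "0 < T $$ (0, 0)"
    using P.D_00_pos Q.D_00_pos by (auto simp: zero_less_mult_iff)
  have corner_le_1: "X $$ (0, 0) \<le> 1"
    if X: "X \<in> carrier_mat n n" and "\<And>v. v \<in> carrier_vec n \<Longrightarrow> sq_norm (X *\<^sub>v v) = sq_norm v" for X
  proof -
    have "(X $$ (0, 0))\<^sup>2 \<le> (\<Sum>i<n. (X $$ (i, 0))\<^sup>2)"
      using P.n_pos by (intro member_le_sum) auto
    also have "\<dots> = 1"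
      using sq_norm_preserving_col[OF that P.n_pos] sq_norm_sum[of "col X 0" n] X P.n_pos by simp
    finally show ?thesis
      by (simp add: abs_square_le_1)
  qed
  have "T $$ (0, 0) * Ti $$ (0, 0) \<le> T $$ (0, 0)"
    using corner_le_1[OF Ti Ti_isometry] T_pos by (simp add: mult_left_le)
  then show ?thesis
    using corner_le_1[OF T isometry] product by linarith
qed

lemma intertwiner_subdiagonal_relation:
  fixes T :: "real mat"
  assumes A: "A \<in> carrier_mat n n" and Q: "unreduced_hoon_pair n d A' C'"
    and T: "T \<in> carrier_mat n n" and intertwine: "T * A' = A * T"
    and previous: "\<And>k. k \<le> j \<Longrightarrow> col T k = unit_vec n k"
    and i: "j < i" "i < n"
  shows "T $$ (i, Suc j) * A' $$ (Suc j, j) = A $$ (i, j)"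
proof -
  interpret Q: unreduced_hoon_pair n d A' C' by (rule Q)
  have T_entry: "T $$ (l, k) = (if l = k then 1 else 0)" if "k \<le> j" "l < n" for k l
  proof -
    have "T $$ (l, k) = col T k $ l"
      using T that i by simp
    then show ?thesis
      using previous[OF that(1)] that i by simp
  qed
  have "(T * A') $$ (i, j) = (\<Sum>k<n. T $$ (i, k) * A' $$ (k, j))"
    using T Q.B_carrier i by (auto simp: scalar_prod_def lessThan_atLeast0)
  also have "\<dots> = T $$ (i, Suc j) * A' $$ (Suc j, j)"
  proof (rule sum_lessThan_single)
    fix k assume k: "k < n" "k \<noteq> Suc j"
    show "T $$ (i, k) * A' $$ (k, j) = 0"
      by (cases "k \<le> j") (use T_entry Q.hessenberg k i in auto)
  qed (use i in simp)
  finally have "(T * A') $$ (i, j) = T $$ (i, Suc j) * A' $$ (Suc j, j)" .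
  moreover have "(A * T) $$ (i, j) = A $$ (i, j)"
  proof -
    have "(A * T) $$ (i, j) = (\<Sum>k<n. A $$ (i, k) * T $$ (k, j))"
      using T A i by (auto simp: scalar_prod_def lessThan_atLeast0)
    also have "\<dots> = A $$ (i, j) * T $$ (j, j)"
      by (rule sum_lessThan_single) (use T_entry i in auto)
    also have "\<dots> = A $$ (i, j)"
      using T_entry[of j j] i by simp
    finally show ?thesis .
  qed
  ultimately show ?thesis
    using intertwine by simp
qed

lemma isometric_intertwiner_diagonal:
  fixes T :: "real mat"
  assumes P: "strict_hoon_pair n d A C" and Q: "strict_hoon_pair n d A' C'"
    and T: "T \<in> carrier_mat n n" and intertwine: "T * A' = A * T"
    and isometry: "\<And>v. v \<in> carrier_vec n \<Longrightarrow> sq_norm (T *\<^sub>v v) = sq_norm v"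
    and previous: "\<And>k. k \<le> j \<Longrightarrow> col T k = unit_vec n k" and j: "Suc j < n"
  shows "T $$ (Suc j, Suc j) = 1"
proof -
  interpret P: strict_hoon_pair n d A C by (rule P)
  interpret Q: strict_hoon_pair n d A' C' by (rule Q)
  have relation: "T $$ (i, Suc j) * A' $$ (Suc j, j) = A $$ (i, j)" if "j < i" "i < n" for i
    by (rule intertwiner_subdiagonal_relation[OF P.B_carrier Q.unreduced_hoon_pair_axioms T intertwine
        previous that])
  have subdiagonal: "0 < A' $$ (Suc j, j)" "0 < A $$ (Suc j, j)"
    using P.subdiagonal_pos[of j] Q.subdiagonal_pos[of j] j by auto
  have below: "T $$ (i, Suc j) = 0" if "Suc j < i" "i < n" for i
    using relation[of i] that P.hessenberg[of i j] subdiagonal by simp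
  have above: "T $$ (i, Suc j) = 0" if "i \<le> j" for i
  proof -
    have "T $$ (i, Suc j) = unit_vec n i \<bullet> (T *\<^sub>v unit_vec n (Suc j))"
      using T that j by simp
    also have "\<dots> = (T *\<^sub>v unit_vec n i) \<bullet> (T *\<^sub>v unit_vec n (Suc j))"
      using mult_unit_vec_eq_col[OF T, of i] previous[OF that] that j by simp
    also have "\<dots> = unit_vec n i \<bullet> unit_vec n (Suc j)"
      by (rule sq_norm_preserving_scalar_prod[OF T isometry]) auto
    finally show ?thesis
      using that j by simp
  qed
  have col: "col T (Suc j) \<in> carrier_vec n"
    using T j by simp
  have "1 = sq_norm (col T (Suc j))"
    using sq_norm_preserving_col[OF T isometry j] by simp
  also have "\<dots> = (T $$ (Suc j, Suc j))\<^sup>2"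
    unfolding sq_norm_sum[OF col]
    by (rule trans[OF sum_lessThan_single[OF j]])
      (use T j above below in \<open>auto simp: not_le nat_neq_iff\<close>)
  finally have "(T $$ (Suc j, Suc j))\<^sup>2 = 1" ..
  moreover have "0 < T $$ (Suc j, Suc j)"
    using relation[of "Suc j"] subdiagonal j by (metis lessI zero_less_mult_pos2)
  ultimately show ?thesis
    by (simp add: power2_eq_1_iff)
qed

lemma isometric_intertwiner_eq_one:
  fixes T :: "real mat"
  assumes P: "strict_hoon_pair n d A C" and Q: "strict_hoon_pair n d A' C'"
    and T: "T \<in> carrier_mat n n" and intertwine: "T * A' = A * T"
    and isometry: "\<And>v. v \<in> carrier_vec n \<Longrightarrow> sq_norm (T *\<^sub>v v) = sq_norm v"
    and corner: "T $$ (0, 0) = 1"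
  shows "T = 1\<^sub>m n"
proof -
  have col_unit: "col T j = unit_vec n j" if "j < n" for j
    using that
  proof (induction j rule: less_induct)
    case (less j)
    have "T $$ (j, j) = 1"
    proof (cases j)
      case (Suc j0)
      then show ?thesis
        using isometric_intertwiner_diagonal[OF P Q T intertwine isometry, of j0] less by simp
    qed (use corner in simp)
    then show ?case
      using sq_norm_eq_1_imp_unit_vec[OF _ less.prems sq_norm_preserving_col[OF T isometry less.prems]]
        T less.prems by simp
  qed
  show ?thesis
  proof (rule eq_matI)
    fix i j assume "i < dim_row (1\<^sub>m n)" "j < dim_col (1\<^sub>m n)"
    then have "i < n" "j < n"
      by auto
    then have "T $$ (i, j) = col T j $ i"
      using T by simp
    then show "T $$ (i, j) = 1\<^sub>m n $$ (i, j)"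
      using col_unit \<open>i < n\<close> \<open>j < n\<close> by simp
  qed (use T in auto)
qed

theorem corollary4p3:
  fixes n d :: nat and A C A' C' :: "real mat"
  assumes "1 \<le> d" and "d \<le> n"
    and "hoon_pair n d A C" and "hoon_strict n A C" and "hoon_nondegenerate A C"
    and "hoon_pair n d A' C'" and "hoon_strict n A' C'"
    and "hoon_equivalent n A C A' C'"
  shows "A' = A \<and> C' = C"
proof -
  obtain T Ti where T: "T \<in> carrier_mat n n" and Ti: "Ti \<in> carrier_mat n n"
    and inverse: "T * Ti = 1\<^sub>m n" "Ti * T = 1\<^sub>m n"
    and A': "A' = Ti * A * T" and C': "C' = C * T"
    using assms(8) unfolding hoon_equivalent_def by auto
  have P: "strict_hoon_pair n d A C" and Q: "strict_hoon_pair n d A' C'"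
    using assms unfolding strict_hoon_pair_def strict_hoon_pair_axioms_def
      unreduced_hoon_pair_def hoon_strict_def by auto
  have A: "A \<in> carrier_mat n n" and C: "C \<in> carrier_mat d n"
    using assms(3) unfolding hoon_pair_def by simp_all
  have "T * A' = (T * Ti) * A * T"
    unfolding A' using T Ti A by (simp add: assoc_mult_mat[of _ n n _ n _ n])
  then have intertwine: "T * A' = A * T"
    using inverse(1) A by simp
  have isometry: "\<And>v. v \<in> carrier_vec n \<Longrightarrow> sq_norm (T *\<^sub>v v) = sq_norm v"
    by (rule intertwiner_preserves_sq_norm[OF assms(3) strict_hoon_pair.axioms(1)[OF Q] T intertwine
        C'[symmetric]])
  have "T = 1\<^sub>m n"
    using isometric_intertwiner_eq_one[OF P Q T intertwine isometry]
      isometric_intertwiner_corner[OF P Q T Ti inverse(1) C'[symmetric] isometry] by simp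
  moreover from this have "Ti = 1\<^sub>m n"
    using inverse(2) Ti by simp
  ultimately show ?thesis
    using A' C' A C by simp
qed

end
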